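(* Let $A$ be a finite alphabet, $\mathbf{w}$ an infinite word over $A$ (not necessarily LSP) and $f$ a bLSP morphism on $A$, with $\alpha={\rm first}(f)$. Suppose a finite word $u$ is an $(a,b,c,\beta,\gamma)$-fragility of $f(\mathbf{w})$. (i) If $u=\varepsilon$, then $a={\rm first}(f)$ and $\beta b,\gamma c\in{\rm Fact}(f({\rm alph}(\mathbf{w})))$. (ii) If $u\neq\varepsilon$, then there exist letters $a',b',c'\in{\rm alph}(\mathbf{w})$ and an $(a',b',c',\beta,\gamma)$-fragility $v$ of $\mathbf{w}$ such that $|v|<|u|$, $f(v)$ is a proper prefix of $u$, and the words $ua$, $\beta ub$, $\gamma uc$ are respectively prefixes of $f(va')\alpha$, $\beta f(vb')\alpha$, $\gamma f(vc')\alpha$.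
   Context: A bLSP morphism on $A$ is an endomorphism $f$ of $A^*$ such that there is a letter $\alpha$ with $f(\alpha)=\alpha$ and, for every letter $\beta\neq\alpha$, there is a letter $\gamma$ with $f(\beta)=f(\gamma)\beta$; this $\alpha$ is unique and denoted ${\rm first}(f)$. For pairwise distinct letters $a,b,c$ and distinct letters $\beta\neq\gamma$, a finite word $u$ is an $(a,b,c,\beta,\gamma)$-fragility of an infinite word $\mathbf{x}$ if $ua$ is a prefix of $\mathbf{x}$ and $\beta ub$, $\gamma uc$ are factors of $\mathbf{x}$. ${\rm alph}(\mathbf{w})$ is the set of letters occurring in $\mathbf{w}$; for a set $X$ of words, ${\rm Fact}(X)$ is the set of factors of words of $X$; $\varepsilon$ is the empty word. *)

theory Defs
  imports Main "HOL-Library.Sublist"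
begin

text \<open>Finite words are lists, infinite words are functions nat => 'a.
A morphism of A* is determined by the images of the letters, f :: 'a => 'a list.\<close>

definition morph :: "('a \<Rightarrow> 'a list) \<Rightarrow> 'a list \<Rightarrow> 'a list" where
  "morph f u = concat (map f u)"

definition pref :: "nat \<Rightarrow> (nat \<Rightarrow> 'a) \<Rightarrow> 'a list" where
  "pref n x = map x [0..<n]"

text \<open>Image of an infinite word under a nonerasing morphism: the n-th letter of
f(x) is the n-th letter of f applied to the prefix of length n+1 of x
(this prefix has an image of length at least n+1 when f is nonerasing).\<close>
definition omorph :: "('a \<Rightarrow> 'a list) \<Rightarrow> (nat \<Rightarrow> 'a) \<Rightarrow> nat \<Rightarrow> 'a" where
  "omorph f x n = morph f (pref (Suc n) x) ! n"

definition is_endo :: "'a set \<Rightarrow> ('a \<Rightarrow> 'a list) \<Rightarrow> bool" where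
  "is_endo A f \<longleftrightarrow> (\<forall>a\<in>A. set (f a) \<subseteq> A)"

definition bLSP :: "'a set \<Rightarrow> ('a \<Rightarrow> 'a list) \<Rightarrow> bool" where
  "bLSP A f \<longleftrightarrow> is_endo A f \<and>
     (\<exists>\<alpha>\<in>A. f \<alpha> = [\<alpha>] \<and> (\<forall>\<beta>\<in>A. \<beta> \<noteq> \<alpha> \<longrightarrow> (\<exists>\<gamma>\<in>A. f \<beta> = f \<gamma> @ [\<beta>])))"

definition first :: "'a set \<Rightarrow> ('a \<Rightarrow> 'a list) \<Rightarrow> 'a" where
  "first A f = (THE \<alpha>. \<alpha> \<in> A \<and> f \<alpha> = [\<alpha>] \<and>
                  (\<forall>\<beta>\<in>A. \<beta> \<noteq> \<alpha> \<longrightarrow> (\<exists>\<gamma>\<in>A. f \<beta> = f \<gamma> @ [\<beta>])))"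

definition is_prefix_inf :: "'a list \<Rightarrow> (nat \<Rightarrow> 'a) \<Rightarrow> bool" where
  "is_prefix_inf u x \<longleftrightarrow> (\<forall>i<length u. u ! i = x i)"

definition is_factor_inf :: "'a list \<Rightarrow> (nat \<Rightarrow> 'a) \<Rightarrow> bool" where
  "is_factor_inf u x \<longleftrightarrow> (\<exists>k. \<forall>i<length u. u ! i = x (k + i))"

definition alph :: "(nat \<Rightarrow> 'a) \<Rightarrow> 'a set" where
  "alph x = range x"

definition Fact :: "'a list set \<Rightarrow> 'a list set" where
  "Fact X = {v. \<exists>x\<in>X. sublist v x}"

definition fragility :: "'a list \<Rightarrow> 'a \<Rightarrow> 'a \<Rightarrow> 'a \<Rightarrow> 'a \<Rightarrow> 'a \<Rightarrow> (nat \<Rightarrow> 'a) \<Rightarrow> bool" where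
  "fragility u a b c \<beta> \<gamma> x \<longleftrightarrow>
     a \<noteq> b \<and> a \<noteq> c \<and> b \<noteq> c \<and> \<beta> \<noteq> \<gamma> \<and>
     is_prefix_inf (u @ [a]) x \<and> is_factor_inf (\<beta> # u @ [b]) x \<and> is_factor_inf (\<gamma> # u @ [c]) x"

end

theory Submission
  imports Defs
begin

text \<open>Unfolding \<open>f(\<beta>) = f(\<gamma>)\<beta>\<close> down to \<open>f(\<alpha>) = \<alpha>\<close> shows
that every image \<open>f(\<beta>)\<close> starts with \<open>\<alpha>\<close>, contains no other \<open>\<alpha>\<close> and ends with \<open>\<beta>\<close>.
Hence in \<open>f(x)\<close> the occurrences of \<open>\<alpha>\<close> are exactly the starting points of the blocks
\<open>f(x\<^sub>i)\<close>, the letter in front of such an occurrence is the previous letter of \<open>x\<close>, and a word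
\<open>f(v)z\<close> with \<open>z\<close> a nonempty prefix of a block determines \<open>v\<close> and \<open>z\<close>. A nonempty fragility
\<open>u\<close> of \<open>f(w)\<close> starts with \<open>\<alpha>\<close>, so each of its three occurrences desubstitutes as the
same \<open>u = f(v)z\<close>; the following letters \<open>a, b, c\<close> are then read off in \<open>f(a')\<alpha>\<close>,
\<open>f(b')\<alpha>\<close>, \<open>f(c')\<alpha>\<close>, which forces \<open>a', b', c'\<close> to be distinct.\<close>

lemma morph_Nil [simp]: "morph f [] = []"
  by (simp add: morph_def)

lemma morph_Cons [simp]: "morph f (x # xs) = f x @ morph f xs"
  by (simp add: morph_def)

lemma morph_append [simp]: "morph f (xs @ ys) = morph f xs @ morph f ys"
  by (simp add: morph_def)

lemma prefix_morph: "prefix xs ys \<Longrightarrow> prefix (morph f xs) (morph f ys)"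
  by (auto simp: prefix_def)

lemma length_le_length_morph:
  "(\<And>x. x \<in> set xs \<Longrightarrow> f x \<noteq> []) \<Longrightarrow> length xs \<le> length (morph f xs)"
proof (induction xs)
  case (Cons x xs)
  then have "f x \<noteq> []" by simp
  with Cons show ?case by (cases "f x") auto
qed simp

lemma split_list_first_unique:
  assumes "x \<notin> set ys" "x \<notin> set ys'" "ys @ x # zs = ys' @ x # zs'"
  shows "ys = ys' \<and> zs = zs'"
proof -
  have "takeWhile (\<lambda>y. y \<noteq> x) (ys @ x # zs) = ys"
    using assms(1) by (auto simp: takeWhile_tail takeWhile_eq_all_conv)
  moreover have "takeWhile (\<lambda>y. y \<noteq> x) (ys' @ x # zs') = ys'"
    using assms(2) by (auto simp: takeWhile_tail takeWhile_eq_all_conv)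
  ultimately show ?thesis using assms(3) by auto
qed

lemma nth_prefix: "prefix xs ys \<Longrightarrow> i < length xs \<Longrightarrow> xs ! i = ys ! i"
  by (auto simp: prefix_def nth_append)

lemma prefix_snoc_snocD: "prefix (xs @ [x]) (ys @ [y]) \<Longrightarrow> prefix xs ys"
  by (auto dest: append_prefixD)

lemma prefix_snoc_eq: "prefix (xs @ [x]) zs \<Longrightarrow> prefix (xs @ [y]) zs \<Longrightarrow> x = y"
  using prefix_same_cases by fastforce

lemma length_pref [simp]: "length (pref n x) = n"
  by (simp add: pref_def)

lemma nth_pref [simp]: "i < n \<Longrightarrow> pref n x ! i = x i"
  by (simp add: pref_def)

lemma set_pref_subset_alph: "set (pref n x) \<subseteq> alph x"
  by (auto simp: pref_def alph_def)

lemma prefix_pref: "m \<le> n \<Longrightarrow> prefix (pref m x) (pref n x)"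
  by (simp add: pref_def prefix_def) (metis le_add_diff_inverse upt_add_eq_append zero_le map_append)

lemma is_prefix_inf_iff_prefix_pref: "is_prefix_inf s x \<longleftrightarrow> (\<exists>n. prefix s (pref n x))"
proof
  assume "is_prefix_inf s x"
  then have "s = pref (length s) x"
    by (intro nth_equalityI) (auto simp: is_prefix_inf_def)
  then show "\<exists>n. prefix s (pref n x)" by (metis prefix_order.refl)
next
  assume "\<exists>n. prefix s (pref n x)"
  then obtain n where "prefix s (pref n x)" by blast
  with prefix_length_le show "is_prefix_inf s x"
    by (fastforce simp: is_prefix_inf_def nth_prefix)
qed

lemma is_factor_inf_iff_prefix_pref:
  "is_factor_inf s x \<longleftrightarrow> (\<exists>p n. prefix (p @ s) (pref n x))"
proof
  assume "is_factor_inf s x"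
  then obtain k where k: "\<forall>i<length s. s ! i = x (k + i)"
    by (auto simp: is_factor_inf_def)
  have "pref k x @ s = pref (k + length s) x"
    using k by (intro nth_equalityI) (auto simp: nth_append)
  then show "\<exists>p n. prefix (p @ s) (pref n x)" by (metis prefix_order.refl)
next
  assume "\<exists>p n. prefix (p @ s) (pref n x)"
  then obtain p n where pn: "prefix (p @ s) (pref n x)" by blast
  have "s ! i = x (length p + i)" if "i < length s" for i
    using nth_prefix[OF pn, of "length p + i"] prefix_length_le[OF pn] that
    by (simp add: nth_append)
  then show "is_factor_inf s x"
    by (auto simp: is_factor_inf_def)
qed

lemma prefix_pref_omorph:
  assumes nonerasing: "\<And>i. f (x i) \<noteq> []" and "n \<le> N"
  shows "prefix (pref n (omorph f x)) (morph f (pref N x))"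
proof -
  have len: "n \<le> length (morph f (pref n x))" for n
    using length_le_length_morph[of "pref n x" f] nonerasing
    by (auto simp: pref_def)
  have "omorph f x i = morph f (pref N x) ! i" if "i < n" for i
  proof -
    have "prefix (morph f (pref (Suc i) x)) (morph f (pref N x))"
      using that \<open>n \<le> N\<close> by (intro prefix_morph prefix_pref) simp
    then show ?thesis
      using len[of "Suc i"] by (simp add: omorph_def nth_prefix)
  qed
  then have "pref n (omorph f x) = take n (morph f (pref N x))"
    using len[of N] \<open>n \<le> N\<close> by (intro nth_equalityI) auto
  then show ?thesis by (simp add: take_is_prefix)
qed

lemma is_prefix_inf_omorph:
  assumes "\<And>i. f (x i) \<noteq> []" "is_prefix_inf s (omorph f x)"
  shows "\<exists>n. prefix s (morph f (pref n x))"
proof -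
  from assms(2) obtain n where "prefix s (pref n (omorph f x))"
    unfolding is_prefix_inf_iff_prefix_pref by blast
  then show ?thesis
    using prefix_pref_omorph[of f x n n] assms(1) prefix_order.trans by blast
qed

lemma is_factor_inf_omorph:
  assumes "\<And>i. f (x i) \<noteq> []" "is_factor_inf s (omorph f x)"
  shows "\<exists>p n. prefix (p @ s) (morph f (pref n x))"
proof -
  from assms(2) obtain p n where "prefix (p @ s) (pref n (omorph f x))"
    unfolding is_factor_inf_iff_prefix_pref by blast
  then show ?thesis
    using prefix_pref_omorph[of f x n n] assms(1) prefix_order.trans by blast
qed

locale marked_morphism =
  fixes A :: "'a set" and f :: "'a \<Rightarrow> 'a list" and \<alpha> :: 'a
  assumes image_marked: "x \<in> A \<Longrightarrow> \<exists>t. f x = \<alpha> # t \<and> \<alpha> \<notin> set t"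
    and inj_on_image: "inj_on f A"
begin

lemma image_nonempty: "x \<in> A \<Longrightarrow> f x \<noteq> []"
  using image_marked by fastforce

lemma fixed_letter_eq_marker: "x \<in> A \<Longrightarrow> f x = [x] \<Longrightarrow> x = \<alpha>"
  using image_marked by fastforce

lemma morph_append_Cons_marker: "set v \<subseteq> A \<Longrightarrow> \<exists>r. morph f v @ \<alpha> # s = \<alpha> # r"
  by (cases v) (auto dest!: image_marked)

lemma prefix_image_marked:
  assumes "z \<noteq> []" "prefix z (f y)" "y \<in> A"
  shows "\<exists>s. z = \<alpha> # s \<and> \<alpha> \<notin> set s"
proof -
  obtain t where t: "f y = \<alpha> # t" "\<alpha> \<notin> set t"
    using image_marked assms(3) by blast
  with assms(1,2) obtain s where "z = \<alpha> # s" "prefix s t"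
    by (auto simp: prefix_Cons)
  with t(2) show ?thesis
    using set_mono_prefix by blast
qed

text \<open>The word \<open>z\<close> is the part of \<open>u\<close> lying in the block \<open>f y\<close> where \<open>u\<close> ends; the
  next letter \<open>a\<close> either continues that block or, when \<open>z = f y\<close>, is the \<open>\<alpha>\<close> opening the
  next block. The single condition on \<open>f y @ [\<alpha>]\<close> covers both cases.\<close>

lemma prefix_morph_desubst:
  assumes "set ys \<subseteq> A" "prefix (u @ [a]) (morph f ys)" "u \<noteq> []"
  shows "\<exists>v y z. prefix (v @ [y]) ys \<and> u = morph f v @ z \<and> z \<noteq> [] \<and>
           prefix (z @ [a]) (f y @ [\<alpha>])"
  using assms
proof (induction ys arbitrary: u)
  case Nil
  then show ?case by simp
next
  case (Cons y ys)
  consider "length u < length (f y)" | "length u = length (f y)" | "length (f y) < length u"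
    by linarith
  then show ?case
  proof cases
    case 1
    then have "prefix (u @ [a]) (f y)"
      using prefix_length_prefix[of "u @ [a]" "f y @ morph f ys" "f y"] Cons.prems(2) by simp
    with Cons.prems(3) show ?thesis
      by (intro exI[of _ "[]"] exI[of _ y] exI[of _ u]) auto
  next
    case 2
    with Cons.prems(2) obtain r where "u = f y" "a # r = morph f ys"
      by (auto simp: prefix_def append_eq_append_conv)
    moreover from this Cons.prems(1) have "a = \<alpha>"
      by (cases ys) (auto dest!: image_marked)
    ultimately show ?thesis using Cons.prems(3)
      by (intro exI[of _ "[]"] exI[of _ y] exI[of _ u]) auto
  next
    case 3
    then have "prefix (f y) u"
      using prefix_length_prefix[of "f y" "f y @ morph f ys" u] append_prefixD Cons.prems(2)
      by fastforce
    with Cons.prems(2) obtain u' where u': "u = f y @ u'" "prefix (u' @ [a]) (morph f ys)"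
      by (auto simp: prefix_def)
    moreover from 3 u' have "u' \<noteq> []" by auto
    moreover from Cons.prems(1) have "set ys \<subseteq> A" by simp
    ultimately obtain v y' z where
      "prefix (v @ [y']) ys" "u' = morph f v @ z" "z \<noteq> []" "prefix (z @ [a]) (f y' @ [\<alpha>])"
      using Cons.IH by blast
    with u' show ?thesis
      by (intro exI[of _ "y # v"] exI[of _ y'] exI[of _ z]) auto
  qed
qed

lemma prefix_morph_pair_cases:
  assumes "set ys \<subseteq> A" "prefix (p @ [\<beta>, b]) (morph f ys)"
  shows "(\<exists>y\<in>set ys. sublist [\<beta>, b] (f y)) \<or>
         b = \<alpha> \<and> (\<exists>ys1 ys2. ys = ys1 @ ys2 \<and> morph f ys1 = p @ [\<beta>])"
  using assms
proof (induction ys arbitrary: p)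
  case Nil
  then show ?case by simp
next
  case (Cons y ys)
  consider "length p + 2 \<le> length (f y)" | "length p + 1 = length (f y)"
    | "length (f y) \<le> length p"
    by linarith
  then show ?case
  proof cases
    case 1
    then have "prefix (p @ [\<beta>, b]) (f y)"
      using prefix_length_prefix[of "p @ [\<beta>, b]" "f y @ morph f ys" "f y"] Cons.prems(2)
      by simp
    then have "sublist [\<beta>, b] (f y)"
      by (meson prefix_imp_sublist sublist_append_leftI sublist_order.order.trans)
    then show ?thesis by auto
  next
    case 2
    from Cons.prems(2) obtain r where "f y @ morph f ys = (p @ [\<beta>]) @ b # r"
      by (auto simp: prefix_def)
    with 2 have "p @ [\<beta>] = f y" "b # r = morph f ys"
      using append_eq_append_conv[of "f y" "p @ [\<beta>]"] by auto
    moreover from this Cons.prems(1) have "b = \<alpha>"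
      by (cases ys) (auto dest!: image_marked)
    ultimately show ?thesis
      by (intro disjI2 conjI exI[of _ "[y]"] exI[of _ ys]) simp_all
  next
    case 3
    then have "prefix (f y) p"
      using prefix_length_prefix[of "f y" "f y @ morph f ys" p] append_prefixD Cons.prems(2)
      by fastforce
    with Cons.prems(2) obtain p' where p': "p = f y @ p'" "prefix (p' @ [\<beta>, b]) (morph f ys)"
      by (auto simp: prefix_def)
    moreover from Cons.prems(1) have "set ys \<subseteq> A" by simp
    ultimately have "(\<exists>y\<in>set ys. sublist [\<beta>, b] (f y)) \<or>
         b = \<alpha> \<and> (\<exists>ys1 ys2. ys = ys1 @ ys2 \<and> morph f ys1 = p' @ [\<beta>])"
      using Cons.IH by blast
    then show ?thesis
    proof
      assume "b = \<alpha> \<and> (\<exists>ys1 ys2. ys = ys1 @ ys2 \<and> morph f ys1 = p' @ [\<beta>])"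
      then obtain ys1 ys2 where "b = \<alpha>" "ys = ys1 @ ys2" "morph f ys1 = p' @ [\<beta>]"
        by blast
      with p'(1) show ?thesis
        by (intro disjI2 conjI exI[of _ "y # ys1"] exI[of _ ys2]) simp_all
    qed auto
  qed
qed

lemma marker_prefix_morph_Nil:
  assumes "set v \<subseteq> A" "\<alpha> # s = morph f v @ \<alpha> # s'" "\<alpha> \<notin> set s"
  shows "v = []"
proof (rule ccontr)
  assume "v \<noteq> []"
  then obtain x v0 where "v = x # v0" by (cases v) auto
  with assms obtain t where "f x = \<alpha> # t" "s = t @ morph f v0 @ \<alpha> # s'"
    using image_marked by fastforce
  with assms(3) show False by simp
qed

lemma morph_decomposition_unique:
  assumes "set v \<subseteq> A" "set v' \<subseteq> A" "y \<in> A" "y' \<in> A"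
    and "z \<noteq> []" "z' \<noteq> []" "prefix z (f y)" "prefix z' (f y')"
    and "morph f v @ z = morph f v' @ z'"
  shows "v = v' \<and> z = z'"
proof -
  obtain s s' where s: "z = \<alpha> # s" "\<alpha> \<notin> set s" and s': "z' = \<alpha> # s'" "\<alpha> \<notin> set s'"
    using prefix_image_marked assms by meson
  show ?thesis
    using assms(1,2,9) unfolding s(1) s'(1)
  proof (induction v arbitrary: v')
    case Nil
    then show ?case
      using marker_prefix_morph_Nil[of v' s s'] s by simp
  next
    case (Cons x v)
    show ?case
    proof (cases v')
      case Nil
      then show ?thesis
        using Cons.prems marker_prefix_morph_Nil[of "x # v" s' s] s' by simp
    next
      case (Cons x' w)
      have in_A: "x \<in> A" "x' \<in> A" "set v \<subseteq> A" "set w \<subseteq> A"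
        using Cons \<open>set (x # v) \<subseteq> A\<close> \<open>set v' \<subseteq> A\<close> by auto
      obtain t t' where t: "f x = \<alpha> # t" "\<alpha> \<notin> set t" and t': "f x' = \<alpha> # t'" "\<alpha> \<notin> set t'"
        using image_marked in_A by meson
      obtain r r' where r: "morph f v @ \<alpha> # s = \<alpha> # r" and r': "morph f w @ \<alpha> # s' = \<alpha> # r'"
        using morph_append_Cons_marker in_A by meson
      have "t @ \<alpha> # r = t' @ \<alpha> # r'"
        using \<open>morph f (x # v) @ \<alpha> # s = morph f v' @ \<alpha> # s'\<close> t t' r r' Cons by simp
      then have "t = t'" "r = r'"
        using split_list_first_unique[OF t(2) t'(2)] by simp_all
      then have "morph f v @ \<alpha> # s = morph f w @ \<alpha> # s'"
        using r r' by simp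
      then have "v = w \<and> \<alpha> # s = \<alpha> # s'"
        using Cons.IH in_A(3,4) by blast
      moreover have "x = x'"
        using inj_onD[OF inj_on_image] t t' \<open>t = t'\<close> in_A(1,2) by metis
      ultimately show ?thesis
        using \<open>v' = x' # w\<close> by simp
    qed
  qed
qed

lemma not_sublist_image_marker: "x \<in> A \<Longrightarrow> \<not> sublist [\<beta>, \<alpha>] (f x)"
proof
  assume "x \<in> A" "sublist [\<beta>, \<alpha>] (f x)"
  moreover obtain t where "f x = \<alpha> # t" "\<alpha> \<notin> set t"
    using image_marked \<open>x \<in> A\<close> by blast
  ultimately show False
    by (auto simp: sublist_Cons_right prefix_Cons dest: set_mono_sublist set_mono_prefix)
qed

end

locale blsp_morphism = marked_morphism +
  assumes last_image: "x \<in> A \<Longrightarrow> last (f x) = x"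
begin

lemma last_morph: "set ys \<subseteq> A \<Longrightarrow> ys \<noteq> [] \<Longrightarrow> last (morph f ys) = last ys"
proof (induction ys rule: rev_induct)
  case (snoc y ys)
  then show ?case using image_nonempty last_image by simp
qed simp

lemma prefix_morph_marker_split:
  assumes "set ys \<subseteq> A" "prefix (p @ \<beta> # \<alpha> # s) (morph f ys)"
  shows "\<exists>q ys2. ys = q @ \<beta> # ys2 \<and> prefix (\<alpha> # s) (morph f ys2)"
proof -
  have "prefix (p @ [\<beta>, \<alpha>]) (morph f ys)"
    using assms(2) append_prefixD[of "p @ [\<beta>, \<alpha>]" s] by simp
  moreover have "\<not> sublist [\<beta>, \<alpha>] (f y)" if "y \<in> set ys" for y
    using not_sublist_image_marker assms(1) that by (simp add: subset_iff)
  ultimately obtain ys1 ys2 where split: "ys = ys1 @ ys2" "morph f ys1 = p @ [\<beta>]"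
    using prefix_morph_pair_cases[OF assms(1)] by blast
  have "ys1 \<noteq> []"
    using split(2) by auto
  moreover have "last ys1 = \<beta>"
    using last_morph[of ys1] split assms(1) \<open>ys1 \<noteq> []\<close> by simp
  ultimately have "ys = butlast ys1 @ \<beta> # ys2"
    using split(1) by (metis append_butlast_last_id append_Cons append_assoc append_Nil)
  moreover have "prefix (\<alpha> # s) (morph f ys2)"
    using assms(2) split by simp
  ultimately show ?thesis
    by blast
qed

lemma prefix_morph_factor_desubst:
  assumes "set ys \<subseteq> A" "prefix (p @ \<beta> # morph f v @ z @ [b]) (morph f ys)"
    and "set v \<subseteq> A" "y \<in> A" "z \<noteq> []" "prefix z (f y)"
  shows "\<exists>q b'. prefix (q @ \<beta> # v @ [b']) ys \<and> prefix (z @ [b]) (f b' @ [\<alpha>])"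
proof -
  obtain s where z: "z = \<alpha> # s"
    using prefix_image_marked assms(4-6) by blast
  obtain r where r: "morph f v @ \<alpha> # s = \<alpha> # r"
    using morph_append_Cons_marker assms(3) by blast
  have "p @ \<beta> # morph f v @ z @ [b] = p @ \<beta> # \<alpha> # r @ [b]"
    unfolding z using r by (metis append_Cons append_assoc)
  with assms(2) have "prefix (p @ \<beta> # \<alpha> # r @ [b]) (morph f ys)"
    by simp
  then obtain q ys2 where ys2: "ys = q @ \<beta> # ys2" "prefix (\<alpha> # r @ [b]) (morph f ys2)"
    using prefix_morph_marker_split assms(1) by blast
  then have "prefix ((morph f v @ z) @ [b]) (morph f ys2)"
    using r unfolding z by simp
  moreover have ys2_A: "set ys2 \<subseteq> A"
    using assms(1) ys2(1) by simp
  ultimately obtain v' b' z' where vbz: "prefix (v' @ [b']) ys2" "morph f v @ z = morph f v' @ z'"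
      "z' \<noteq> []" "prefix (z' @ [b]) (f b' @ [\<alpha>])"
    using prefix_morph_desubst assms(5) by blast
  have "set v' \<subseteq> A" "b' \<in> A"
    using set_mono_prefix[OF vbz(1)] ys2_A by auto
  then have "v = v'" "z = z'"
    using morph_decomposition_unique[OF assms(3) _ assms(4) _ assms(5) vbz(3) assms(6)]
      prefix_snoc_snocD[OF vbz(4)] vbz(2) by simp_all
  moreover have "prefix (q @ \<beta> # v @ [b']) ys"
    using ys2(1) vbz(1) \<open>v = v'\<close> by simp
  ultimately show ?thesis
    using vbz(4) by blast
qed

end

lemma blsp_morphismI:
  assumes "\<alpha> \<in> A" "f \<alpha> = [\<alpha>]"
    and step: "\<And>\<beta>. \<beta> \<in> A \<Longrightarrow> \<beta> \<noteq> \<alpha> \<Longrightarrow> \<exists>\<gamma>\<in>A. f \<beta> = f \<gamma> @ [\<beta>]"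
  shows "blsp_morphism A f \<alpha>"
proof -
  have marked_last: "(\<exists>t. f x = \<alpha> # t \<and> \<alpha> \<notin> set t) \<and> last (f x) = x" if "x \<in> A" for x
    using that
  proof (induction "length (f x)" arbitrary: x rule: less_induct)
    case less
    show ?case
    proof (cases "x = \<alpha>")
      case True
      with assms(2) show ?thesis by simp
    next
      case False
      with step less.prems obtain \<gamma> where "\<gamma> \<in> A" "f x = f \<gamma> @ [x]" by blast
      with less.hyps[of \<gamma>] False show ?thesis by auto
    qed
  qed
  show ?thesis
  proof
    show "inj_on f A"
      by (intro inj_onI) (metis marked_last)
  qed (use marked_last in auto)
qed

lemma bLSP_imp_blsp_morphism:
  assumes "bLSP A f"
  shows "blsp_morphism A f (first A f)"
proof -
  obtain \<alpha> where \<alpha>: "\<alpha> \<in> A \<and> f \<alpha> = [\<alpha>] \<and> (\<forall>\<beta>\<in>A. \<beta> \<noteq> \<alpha> \<longrightarrow> (\<exists>\<gamma>\<in>A. f \<beta> = f \<gamma> @ [\<beta>]))"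
    using assms unfolding bLSP_def by blast
  then interpret blsp_morphism A f \<alpha>
    by (intro blsp_morphismI) auto
  have "first A f = \<alpha>"
    unfolding first_def using \<alpha> fixed_letter_eq_marker by (intro the_equality) auto
  then show ?thesis
    using blsp_morphism_axioms by simp
qed

context blsp_morphism
begin

lemma image_nonempty_alph: "alph w \<subseteq> A \<Longrightarrow> f (w i) \<noteq> []"
  using image_nonempty by (simp add: alph_def image_subset_iff)

lemma set_pref_subset: "alph w \<subseteq> A \<Longrightarrow> set (pref n w) \<subseteq> A"
  using set_pref_subset_alph by (rule order.trans)

lemma omorph_0: "alph w \<subseteq> A \<Longrightarrow> omorph f w 0 = \<alpha>"
  using image_marked[of "w 0"] by (force simp: omorph_def pref_def alph_def)

lemma is_prefix_inf_omorph_desubst: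
  assumes "alph w \<subseteq> A" "is_prefix_inf (u @ [a]) (omorph f w)" "u \<noteq> []"
  shows "\<exists>v a' z. a' \<in> alph w \<and> set v \<subseteq> A \<and> is_prefix_inf (v @ [a']) w \<and>
           u = morph f v @ z \<and> z \<noteq> [] \<and> prefix (z @ [a]) (f a' @ [\<alpha>])"
proof -
  obtain n where "prefix (u @ [a]) (morph f (pref n w))"
    using is_prefix_inf_omorph[OF image_nonempty_alph[OF assms(1)] assms(2)] by blast
  then obtain v a' z where vaz: "prefix (v @ [a']) (pref n w)" "u = morph f v @ z" "z \<noteq> []"
      "prefix (z @ [a]) (f a' @ [\<alpha>])"
    using prefix_morph_desubst[OF set_pref_subset[OF assms(1)] _ assms(3)] by blast
  moreover have "set (v @ [a']) \<subseteq> alph w"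
    using set_mono_prefix[OF vaz(1)] set_pref_subset_alph by (rule order.trans)
  then have "a' \<in> alph w" "set v \<subseteq> A"
    using assms(1) by auto
  moreover have "is_prefix_inf (v @ [a']) w"
    using vaz(1) unfolding is_prefix_inf_iff_prefix_pref by blast
  ultimately show ?thesis
    by blast
qed

lemma is_factor_inf_omorph_desubst:
  assumes "alph w \<subseteq> A" "is_factor_inf (\<beta> # morph f v @ z @ [b]) (omorph f w)"
    and "set v \<subseteq> A" "y \<in> A" "z \<noteq> []" "prefix z (f y)"
  shows "\<exists>b'. b' \<in> alph w \<and> is_factor_inf (\<beta> # v @ [b']) w \<and> prefix (z @ [b]) (f b' @ [\<alpha>])"
proof -
  obtain p n where "prefix (p @ \<beta> # morph f v @ z @ [b]) (morph f (pref n w))"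
    using is_factor_inf_omorph[OF image_nonempty_alph[OF assms(1)] assms(2)] by blast
  then obtain q b' where qb: "prefix (q @ \<beta> # v @ [b']) (pref n w)" "prefix (z @ [b]) (f b' @ [\<alpha>])"
    using prefix_morph_factor_desubst[OF set_pref_subset[OF assms(1)] _ assms(3-6)] by blast
  then have "is_factor_inf (\<beta> # v @ [b']) w"
    unfolding is_factor_inf_iff_prefix_pref by blast
  moreover have "b' \<in> alph w"
    using set_mono_prefix[OF qb(1)] set_pref_subset_alph by fastforce
  ultimately show ?thesis
    using qb(2) by blast
qed

lemma is_factor_inf_omorph_pair:
  assumes "alph w \<subseteq> A" "is_factor_inf [\<beta>, b] (omorph f w)" "b \<noteq> \<alpha>"
  shows "[\<beta>, b] \<in> Fact (f ` alph w)"
proof -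
  obtain p n where "prefix (p @ [\<beta>, b]) (morph f (pref n w))"
    using is_factor_inf_omorph[OF image_nonempty_alph[OF assms(1)] assms(2)] by blast
  then obtain y where "y \<in> set (pref n w)" "sublist [\<beta>, b] (f y)"
    using prefix_morph_pair_cases[OF set_pref_subset[OF assms(1)]] assms(3) by blast
  moreover from this(1) have "y \<in> alph w"
    by (rule subsetD[OF set_pref_subset_alph])
  ultimately show ?thesis
    unfolding Fact_def by blast
qed

lemma fragility_omorph_Nil:
  assumes "alph w \<subseteq> A" "fragility [] a b c \<beta> \<gamma> (omorph f w)"
  shows "a = \<alpha> \<and> [\<beta>, b] \<in> Fact (f ` alph w) \<and> [\<gamma>, c] \<in> Fact (f ` alph w)"
proof -
  from assms(2) have "a \<noteq> b" "a \<noteq> c" "is_prefix_inf [a] (omorph f w)"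
    "is_factor_inf [\<beta>, b] (omorph f w)" "is_factor_inf [\<gamma>, c] (omorph f w)"
    by (simp_all add: fragility_def)
  moreover from this(3) have "a = \<alpha>"
    using omorph_0[OF assms(1)] by (simp add: is_prefix_inf_def)
  ultimately show ?thesis
    using is_factor_inf_omorph_pair[OF assms(1)] by simp
qed

lemma fragility_omorph_desubst:
  assumes "alph w \<subseteq> A" "fragility u a b c \<beta> \<gamma> (omorph f w)" "u \<noteq> []"
  shows "\<exists>a' b' c' v. a' \<in> alph w \<and> b' \<in> alph w \<and> c' \<in> alph w \<and>
           fragility v a' b' c' \<beta> \<gamma> w \<and> length v < length u \<and>
           strict_prefix (morph f v) u \<and>
           prefix (u @ [a]) (morph f (v @ [a']) @ [\<alpha>]) \<and>
           prefix (\<beta> # u @ [b]) (\<beta> # morph f (v @ [b']) @ [\<alpha>]) \<and>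
           prefix (\<gamma> # u @ [c]) (\<gamma> # morph f (v @ [c']) @ [\<alpha>])"
proof -
  from assms(2) have distinct: "a \<noteq> b" "a \<noteq> c" "b \<noteq> c" "\<beta> \<noteq> \<gamma>"
    and prefix: "is_prefix_inf (u @ [a]) (omorph f w)"
    and factors: "is_factor_inf (\<beta> # u @ [b]) (omorph f w)" "is_factor_inf (\<gamma> # u @ [c]) (omorph f w)"
    by (simp_all add: fragility_def)
  obtain v a' z where a': "a' \<in> alph w" "set v \<subseteq> A" "is_prefix_inf (v @ [a']) w"
      "u = morph f v @ z" "z \<noteq> []" "prefix (z @ [a]) (f a' @ [\<alpha>])"
    using is_prefix_inf_omorph_desubst[OF assms(1) prefix assms(3)] by blast
  have "a' \<in> A" "prefix z (f a')"
    using a'(1) assms(1) prefix_snoc_snocD[OF a'(6)] by auto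
  note desubst = is_factor_inf_omorph_desubst[OF assms(1) _ a'(2) this(1) a'(5) this(2)]
  obtain b' c' where
    b': "b' \<in> alph w" "is_factor_inf (\<beta> # v @ [b']) w" "prefix (z @ [b]) (f b' @ [\<alpha>])" and
    c': "c' \<in> alph w" "is_factor_inf (\<gamma> # v @ [c']) w" "prefix (z @ [c]) (f c' @ [\<alpha>])"
    using desubst[OF factors(1)[unfolded a'(4) append_assoc]]
      desubst[OF factors(2)[unfolded a'(4) append_assoc]] by blast
  have "a' \<noteq> b'" "a' \<noteq> c'" "b' \<noteq> c'"
    using prefix_snoc_eq a'(6) b'(3) c'(3) distinct by metis+
  then have "fragility v a' b' c' \<beta> \<gamma> w"
    unfolding fragility_def using distinct(4) a'(3) b'(2) c'(2) by blast
  moreover have "length v < length u"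
  proof -
    have "length v \<le> length (morph f v)"
      using a'(2) image_nonempty by (intro length_le_length_morph) blast
    with a'(4,5) show ?thesis
      by (cases z) auto
  qed
  moreover have "strict_prefix (morph f v) u"
    using a'(4,5) by (simp add: strict_prefix_def)
  moreover have "prefix (u @ [a]) (morph f (v @ [a']) @ [\<alpha>])"
    "prefix (\<beta> # u @ [b]) (\<beta> # morph f (v @ [b']) @ [\<alpha>])"
    "prefix (\<gamma> # u @ [c]) (\<gamma> # morph f (v @ [c']) @ [\<alpha>])"
    using a'(4,6) b'(3) c'(3) by simp_all
  ultimately show ?thesis
    using a'(1) b'(1) c'(1) by blast
qed

end

theorem lemma4:
  fixes A :: "'a set" and w :: "nat \<Rightarrow> 'a" and f :: "'a \<Rightarrow> 'a list"
    and u :: "'a list" and a b c \<beta> \<gamma> :: 'a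
  assumes "finite A"
    and "alph w \<subseteq> A"
    and "bLSP A f"
    and "fragility u a b c \<beta> \<gamma> (omorph f w)"
  shows "(u = [] \<longrightarrow>
            a = first A f \<and> [\<beta>, b] \<in> Fact (f ` alph w) \<and> [\<gamma>, c] \<in> Fact (f ` alph w))
       \<and> (u \<noteq> [] \<longrightarrow>
            (\<exists>a' b' c' v. a' \<in> alph w \<and> b' \<in> alph w \<and> c' \<in> alph w \<and>
               fragility v a' b' c' \<beta> \<gamma> w \<and> length v < length u \<and>
               strict_prefix (morph f v) u \<and>
               prefix (u @ [a]) (morph f (v @ [a']) @ [first A f]) \<and>
               prefix (\<beta> # u @ [b]) (\<beta> # morph f (v @ [b']) @ [first A f]) \<and>
               prefix (\<gamma> # u @ [c]) (\<gamma> # morph f (v @ [c']) @ [first A f])))"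
proof -
  interpret blsp_morphism A f "first A f"
    using bLSP_imp_blsp_morphism[OF assms(3)] .
  show ?thesis
  proof (cases "u = []")
    case True
    then show ?thesis
      using fragility_omorph_Nil[OF assms(2)] assms(4) by simp
  next
    case False
    then show ?thesis
      using fragility_omorph_desubst[OF assms(2,4)] by simp
  qed
qed

end
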